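(* Fix $\bar y\in\mathbb{R}$. Assume Assumption A, that for each $n$ the variables $\{\eta^n_0(x):x\in\mathbb{Z}\}$ are independent, and that $\sup_{n,x}E[\eta^n_0(x)^6]<\infty$. Then there is a finite constant $C$ such that for all $n\in\mathbb{N}$, all $0\le s\le t$ and every integer $1\le k\le 6$, $$\sum_{m\in\mathbb{Z}}E|G_m|^k\le C\big(\sqrt{n(t-s)}+1\big).$$
   Context: Setting. Let $p=\{p(x):x\in\mathbb{Z}\}$ be a probability kernel on $\mathbb{Z}$. Assumption A: for some $\delta>0$, $\sum_{x}e^{\theta x}p(x)<\infty$ for $|\theta|\le\delta$. Set $b=\sum_x xp(x)$. A "random walk" is a continuous-time random walk on $\mathbb{Z}$ that jumps at rate 1 with increments distributed according to $p$. For each $n$ nonnegative integer initial occupation variables $\eta^n_0(m)$, $m\in\mathbb{Z}$, are given with $\rho^n_0(m)=E\eta^n_0(m)$; the $\eta^n_0(m)$ particles initially at $m$ move as independent random walks $X^n_{m,j}(\cdot)$, $1\le j\le\eta^n_0(m)$ (with $X^n_{m,j}(0)=m$), independent of the initial occupation variables. $[\cdot]$ denotes the integer part. For fixed $n$ and $0\le s\le t$ define the events $A_{m,j}=\{X^n_{m,j}(ns)>[n\bar y]+[nbs],\ X^n_{m,j}(nt)\le[n\bar y]+[nbt]\}$, $B_{m,j}=\{X^n_{m,j}(ns)\le[n\bar y]+[nbs],\ X^n_{m,j}(nt)>[n\bar y]+[nbt]\}$, and $G_m=\sum_{j=1}^{\eta^n_0(m)}(\mathbf 1_{A_{m,j}}-\mathbf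 1_{B_{m,j}})-\rho^n_0(m)\big(P(A_{m,1})-P(B_{m,1})\big)$, where $P(A_{m,1}),P(B_{m,1})$ denote the probabilities for a random walk started at $m$. *)

theory Defs
  imports "HOL-Probability.Probability"
begin

fun conv_pow :: "(int \<Rightarrow> real) \<Rightarrow> nat \<Rightarrow> int \<Rightarrow> real" where
  "conv_pow p 0 = (\<lambda>x. if x = 0 then 1 else 0)"
| "conv_pow p (Suc k) = (\<lambda>x. \<Sum>\<^sub>\<infinity>y. p y * conv_pow p k (x - y))"

text \<open>Transition probabilities of the rate-1 continuous-time random walk with
  jump distribution p: probability of displacement x in time u.\<close>
definition ctrw_kernel :: "(int \<Rightarrow> real) \<Rightarrow> real \<Rightarrow> int \<Rightarrow> real" where
  "ctrw_kernel p u x = (\<Sum>k. exp (- u) * u ^ k / fact k * conv_pow p k x)"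

definition prob_kernel :: "(int \<Rightarrow> real) \<Rightarrow> bool" where
  "prob_kernel p \<longleftrightarrow> (\<forall>x. 0 \<le> p x) \<and> (p has_sum 1) UNIV"

definition ctrw :: "'a measure \<Rightarrow> (int \<Rightarrow> real) \<Rightarrow> int \<Rightarrow> ('a \<Rightarrow> real \<Rightarrow> int) \<Rightarrow> bool" where
  "ctrw M p x0 X \<longleftrightarrow>
     X \<in> M \<rightarrow>\<^sub>M (\<Pi>\<^sub>M t\<in>UNIV. count_space UNIV) \<and>
     (AE \<omega> in M. X \<omega> 0 = x0) \<and>
     (\<forall>ts :: real list. sorted ts \<and> (\<forall>t\<in>set ts. 0 \<le> t) \<longrightarrow>
        prob_space.indep_vars M (\<lambda>_. count_space UNIV)
          (\<lambda>i \<omega>. X \<omega> (ts ! Suc i) - X \<omega> (ts ! i)) {..<length ts - 1}) \<and>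
     (\<forall>s t x. 0 \<le> s \<and> s \<le> t \<longrightarrow>
        measure M {\<omega> \<in> space M. X \<omega> t - X \<omega> s = x} = ctrw_kernel p (t - s) x)"

definition evA :: "'a measure \<Rightarrow> ('a \<Rightarrow> real \<Rightarrow> int) \<Rightarrow> nat \<Rightarrow> real \<Rightarrow> real \<Rightarrow> real \<Rightarrow> real \<Rightarrow> 'a set" where
  "evA M Z n ybar b s t = {\<omega> \<in> space M.
      Z \<omega> (real n * s) > \<lfloor>real n * ybar\<rfloor> + \<lfloor>real n * b * s\<rfloor> \<and>
      Z \<omega> (real n * t) \<le> \<lfloor>real n * ybar\<rfloor> + \<lfloor>real n * b * t\<rfloor>}"

definition evB :: "'a measure \<Rightarrow> ('a \<Rightarrow> real \<Rightarrow> int) \<Rightarrow> nat \<Rightarrow> real \<Rightarrow> real \<Rightarrow> real \<Rightarrow> real \<Rightarrow> 'a set" where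
  "evB M Z n ybar b s t = {\<omega> \<in> space M.
      Z \<omega> (real n * s) \<le> \<lfloor>real n * ybar\<rfloor> + \<lfloor>real n * b * s\<rfloor> \<and>
      Z \<omega> (real n * t) > \<lfloor>real n * ybar\<rfloor> + \<lfloor>real n * b * t\<rfloor>}"

text \<open>G_m for fixed n: eta0 = occupation variable at m, W j = walk of the j-th particle at m.\<close>
definition Gm :: "'a measure \<Rightarrow> ('a \<Rightarrow> nat) \<Rightarrow> (nat \<Rightarrow> 'a \<Rightarrow> real \<Rightarrow> int) \<Rightarrow> nat \<Rightarrow> real \<Rightarrow> real \<Rightarrow> real \<Rightarrow> real \<Rightarrow> 'a \<Rightarrow> real" where
  "Gm M eta0 W n ybar b s t \<omega> =
     (\<Sum>j = 1..eta0 \<omega>. indicator (evA M (W j) n ybar b s t) \<omega>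
                       - indicator (evB M (W j) n ybar b s t) \<omega>)
     - (\<integral>\<omega>'. real (eta0 \<omega>') \<partial>M) *
       (measure M (evA M (W 1) n ybar b s t) - measure M (evB M (W 1) n ybar b s t))"

end

theory Submission
  imports Defs
begin

(* Call a particle crossing if it lies on different sides of the moving level [n ybar] + [n b u]
   at the times u = ns and u = nt, i.e. if A or B occurs. Then |G_m| is at most the number N_m of
   crossing particles at m plus E eta(m) P(a walk from m crosses), and since eta(m) is independent
   of the walks, E |G_m|^k <= c P(a walk from m crosses), with c depending only on the bound on the
   sixth moments. A walk with displacement d over [ns, nt] crosses from exactly |d - ([nbt] - [nbs])|
   starting points, so the sum over m of these probabilities is E |D - ([nbt] - [nbs])| for the
   displacement D over a time n(t - s). D has mean n(t - s) b and second moment about it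
   n(t - s) times the second moment of p, which is finite thanks to the exponential moments;
   whence the bound O(sqrt (n(t - s)) + 1). *)

lemma infsum_ennreal_eq_nn_integral:
  fixes f :: "'a::countable \<Rightarrow> ennreal"
  shows "infsum f UNIV = (\<integral>\<^sup>+x. f x \<partial>count_space UNIV)"
proof (rule antisym)
  have sum_eq: "sum f F = (\<integral>\<^sup>+x. f x * indicator F x \<partial>count_space UNIV)" if "finite F" for F :: "'a set"
    using that by (simp add: nn_integral_indicator_finite)
  show "infsum f UNIV \<le> (\<integral>\<^sup>+x. f x \<partial>count_space UNIV)"
    unfolding nonneg_infsum_complete[OF zero_le]
  proof (rule SUP_least)
    fix F :: "'a set" assume "F \<in> {F. finite F \<and> F \<subseteq> UNIV}"
    then have "sum f F = (\<integral>\<^sup>+x. f x * indicator F x \<partial>count_space UNIV)"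
      by (simp add: sum_eq)
    also have "\<dots> \<le> (\<integral>\<^sup>+x. f x \<partial>count_space UNIV)"
      by (intro nn_integral_mono) (simp add: indicator_def)
    finally show "sum f F \<le> (\<integral>\<^sup>+x. f x \<partial>count_space UNIV)" .
  qed
  define F where "F N = (to_nat -` {..<N} :: 'a set)" for N :: nat
  have fin: "finite (F N)" for N
    unfolding F_def by (intro finite_vimageI) auto
  have "(\<integral>\<^sup>+x. f x \<partial>count_space UNIV) = (\<integral>\<^sup>+x. (SUP N. f x * indicator (F N) x) \<partial>count_space UNIV)"
  proof (intro nn_integral_cong antisym)
    fix x :: 'a
    have "f x = f x * indicator (F (Suc (to_nat x))) x" by (simp add: F_def)
    then show "f x \<le> (SUP N. f x * indicator (F N) x)" by (metis SUP_upper UNIV_I)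
  qed (auto intro!: SUP_least simp: indicator_def)
  also have "\<dots> = (SUP N. \<integral>\<^sup>+x. f x * indicator (F N) x \<partial>count_space UNIV)"
    by (rule nn_integral_monotone_convergence_SUP)
       (auto intro!: incseq_SucI le_funI simp: F_def indicator_def)
  also have "\<dots> = (SUP N. sum f (F N))" by (simp add: sum_eq fin)
  also have "\<dots> \<le> infsum f UNIV"
    unfolding nonneg_infsum_complete[OF zero_le] by (intro SUP_mono) (auto intro: fin)
  finally show "(\<integral>\<^sup>+x. f x \<partial>count_space UNIV) \<le> infsum f UNIV" .
qed

lemma nn_integral_count_space_eq_has_sum:
  fixes f :: "'a \<Rightarrow> real"
  assumes nonneg: "\<And>x. 0 \<le> f x" and "(f has_sum a) UNIV"
  shows "(\<integral>\<^sup>+x. ennreal (f x) \<partial>count_space UNIV) = ennreal a"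
proof -
  have "(\<lambda>x. norm (f x)) summable_on UNIV"
    using assms by (auto simp: summable_on_def)
  then have abs_summable: "Infinite_Set_Sum.abs_summable_on f UNIV"
    using abs_summable_equivalent by blast
  have "(\<integral>\<^sup>+x. ennreal (f x) \<partial>count_space UNIV) = ennreal (infsetsum f UNIV)"
    using nn_integral_conv_infsetsum[OF abs_summable] nonneg by simp
  also have "infsetsum f UNIV = a"
    using infsetsum_infsum[OF abs_summable] assms(2) by (simp add: infsumI)
  finally show ?thesis .
qed

lemma le_nn_integral_count_space:
  fixes f :: "'a \<Rightarrow> ennreal"
  shows "f x \<le> (\<integral>\<^sup>+z. f z \<partial>count_space UNIV)"
proof -
  have "f x = (\<integral>\<^sup>+z. f z * indicator {x} z \<partial>count_space UNIV)" by simp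
  also have "\<dots> \<le> (\<integral>\<^sup>+z. f z \<partial>count_space UNIV)"
    by (intro nn_integral_mono) (auto simp: indicator_def)
  finally show ?thesis .
qed

lemma nn_integral_count_space_int_shift:
  fixes f :: "int \<Rightarrow> ennreal"
  shows "(\<integral>\<^sup>+x. f (x + y) \<partial>count_space UNIV) = (\<integral>\<^sup>+x. f x \<partial>count_space UNIV)"
proof -
  have "bij (\<lambda>x. x + y)" by (rule bij_betwI[of _ _ _ "\<lambda>x. x - y"]) auto
  then show ?thesis using nn_integral_bij_count_space[of "\<lambda>x. x + y" UNIV UNIV f] by simp
qed

lemma nn_integral_discrete_indicator:
  fixes Z :: "'a \<Rightarrow> 'b::countable" and f :: "'b \<Rightarrow> ennreal"
  assumes [measurable]: "Z \<in> M \<rightarrow>\<^sub>M count_space UNIV" and [measurable]: "C \<in> sets M"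
  shows "(\<integral>\<^sup>+\<omega>. f (Z \<omega>) * indicator C \<omega> \<partial>M) =
    (\<integral>\<^sup>+z. f z * emeasure M ({\<omega>\<in>space M. Z \<omega> = z} \<inter> C) \<partial>count_space UNIV)"
proof -
  have "(\<integral>\<^sup>+\<omega>. f (Z \<omega>) * indicator C \<omega> \<partial>M) =
      (\<integral>\<^sup>+\<omega>. \<integral>\<^sup>+z. f z * indicator ({\<omega>\<in>space M. Z \<omega> = z} \<inter> C) \<omega> \<partial>count_space UNIV \<partial>M)"
    by (intro nn_integral_cong, subst nn_integral_count_space'[of "{Z _}"]) (auto simp: indicator_def)
  also have "\<dots> = (\<integral>\<^sup>+z. \<integral>\<^sup>+\<omega>. f z * indicator ({\<omega>\<in>space M. Z \<omega> = z} \<inter> C) \<omega> \<partial>M \<partial>count_space UNIV)"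
    by (rule nn_integral_count_space_nn_integral) auto
  finally show ?thesis by (simp add: nn_integral_cmult_indicator)
qed

lemma nn_integral_indep_indicator:
  fixes E :: "'a \<Rightarrow> 'b::countable" and g :: "'b \<Rightarrow> ennreal"
  assumes [measurable]: "E \<in> M \<rightarrow>\<^sub>M count_space UNIV" "C \<in> sets M"
    and indep: "\<And>v. emeasure M ({\<omega>\<in>space M. E \<omega> = v} \<inter> C) = emeasure M {\<omega>\<in>space M. E \<omega> = v} * emeasure M C"
  shows "(\<integral>\<^sup>+\<omega>. g (E \<omega>) * indicator C \<omega> \<partial>M) = (\<integral>\<^sup>+\<omega>. g (E \<omega>) \<partial>M) * emeasure M C"
proof -
  have "(\<integral>\<^sup>+\<omega>. g (E \<omega>) \<partial>M) = (\<integral>\<^sup>+\<omega>. g (E \<omega>) * indicator (space M) \<omega> \<partial>M)"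
    by (intro nn_integral_cong) simp
  also have "\<dots> = (\<integral>\<^sup>+v. g v * emeasure M {\<omega>\<in>space M. E \<omega> = v} \<partial>count_space UNIV)"
    using nn_integral_discrete_indicator[of E M "space M" g] by (simp add: Collect_conj_eq Int_absorb2)
  finally show ?thesis
    by (simp add: nn_integral_discrete_indicator indep nn_integral_multc flip: mult.assoc)
qed

lemma (in prob_space) indep_setsD2:
  assumes "indep_sets F I" and "i \<in> I" "j \<in> I" "i \<noteq> j" and "A \<in> F i" "B \<in> F j"
  shows "prob (A \<inter> B) = prob A * prob B"
proof -
  have "prob (\<Inter>l\<in>{i, j}. if l = i then A else B) = (\<Prod>l\<in>{i, j}. prob (if l = i then A else B))"
    using assms by (intro indep_setsD[OF assms(1)]) auto
  then show ?thesis using \<open>i \<noteq> j\<close> by (simp add: Int_commute)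
qed

lemma abs_le_square_div_add:
  fixes r e y :: real
  assumes "1 \<le> r" and "\<bar>e\<bar> \<le> 1"
  shows "\<bar>y\<bar> \<le> (y - e)^2 / r + 1 / r + r / 2"
proof -
  have "2 * r * \<bar>y\<bar> \<le> y^2 + r^2"
    using zero_le_power2[of "\<bar>y\<bar> - r"] by (simp add: power2_eq_square algebra_simps)
  moreover have "y^2 \<le> 2 * (y - e)^2 + 2 * e^2"
    using zero_le_power2[of "y - 2 * e"] by (simp add: power2_eq_square algebra_simps)
  moreover have "e^2 \<le> 1"
    using assms(2) by (simp add: abs_square_le_1)
  ultimately have "2 * r * \<bar>y\<bar> \<le> 2 * (y - e)^2 + 2 + r^2" by linarith
  then show ?thesis using assms(1) by (simp add: field_simps power2_eq_square)
qed

lemma power_le_of_abs_le_add: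
  fixes g N e \<mu> q K :: real
  assumes "\<bar>g\<bar> \<le> N + \<mu> * q" and "0 \<le> N" "N \<le> e" and "0 \<le> \<mu>" "\<mu> \<le> K" "1 \<le> K"
    and "0 \<le> q" "q \<le> 1" and "1 \<le> k" "k \<le> 6"
  shows "\<bar>g\<bar>^k \<le> 64 * (e^(k - 1) * N + K^6 * q)"
proof -
  have "\<bar>g\<bar>^k \<le> (2 * max N (\<mu> * q))^k"
    using assms(1,2,4,7) by (intro power_mono) auto
  also have "\<dots> = 2^k * (max N (\<mu> * q))^k"
    by (simp add: power_mult_distrib)
  also have "\<dots> \<le> 64 * (N^k + (\<mu> * q)^k)"
  proof (rule mult_mono)
    show "(2::real)^k \<le> 64" using power_increasing[OF \<open>k \<le> 6\<close>, of "2::real"] by simp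
    show "(max N (\<mu> * q))^k \<le> N^k + (\<mu> * q)^k"
      using assms(2,4,7) by (cases "N \<le> \<mu> * q") (auto simp: max_def)
  qed (use assms(2,4,7) in auto)
  also have "N^k \<le> e^(k - 1) * N"
    using \<open>1 \<le> k\<close> assms(2,3) power_mono[OF \<open>N \<le> e\<close> \<open>0 \<le> N\<close>, of "k - 1"]
    by (metis Suc_diff_le diff_Suc_1 mult_right_mono power_Suc2)
  also have "(\<mu> * q)^k \<le> K^6 * q"
  proof -
    have "\<mu>^k \<le> K^6"
      using power_mono[OF \<open>\<mu> \<le> K\<close> \<open>0 \<le> \<mu>\<close>, of k] power_increasing[OF \<open>k \<le> 6\<close> \<open>1 \<le> K\<close>] by simp
    moreover have "q^k \<le> q"
      using power_decreasing[OF \<open>1 \<le> k\<close> \<open>0 \<le> q\<close> \<open>q \<le> 1\<close>] by simp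
    ultimately show ?thesis
      using assms(4,7) by (simp add: power_mult_distrib mult_mono)
  qed
  finally show ?thesis by simp
qed

lemma abs_floor_diff_le: "\<bar>real_of_int (\<lfloor>x\<rfloor> - \<lfloor>y\<rfloor>) - (x - y)\<bar> \<le> 1"
  by linarith

definition poisson_weight :: "real \<Rightarrow> nat \<Rightarrow> real" where
  "poisson_weight u k = exp (- u) * u ^ k / fact k"

lemma poisson_weight_nonneg: "0 \<le> u \<Longrightarrow> 0 \<le> poisson_weight u k"
  unfolding poisson_weight_def by simp

lemma sums_poisson_weight: "poisson_weight u sums 1"
proof -
  have "(\<lambda>k. exp (- u) * (u ^ k /\<^sub>R fact k)) sums (exp (- u) * exp u)"
    by (intro sums_mult exp_converges)
  moreover have "(\<lambda>k. exp (- u) * (u ^ k /\<^sub>R fact k)) = poisson_weight u"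
    by (simp add: fun_eq_iff poisson_weight_def scaleR_conv_of_real divide_inverse mult_ac)
  ultimately show ?thesis by (simp add: exp_minus field_simps)
qed

lemma poisson_weight_Suc: "poisson_weight u (Suc k) * real (Suc k) = u * poisson_weight u k"
  unfolding poisson_weight_def by (simp add: field_simps del: of_nat_Suc)

lemma sums_poisson_weight_mult: "(\<lambda>k. poisson_weight u k * real k) sums u"
proof -
  have "(\<lambda>k. u * poisson_weight u k) sums (u * 1)"
    by (intro sums_mult sums_poisson_weight)
  then have "(\<lambda>k. poisson_weight u (Suc k) * real (Suc k)) sums u"
    by (simp only: poisson_weight_Suc) simp
  then show ?thesis by (subst (asm) sums_Suc_iff) simp
qed

lemma sums_poisson_weight_square: "(\<lambda>k. poisson_weight u k * real k ^ 2) sums (u^2 + u)"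
proof -
  have "(\<lambda>k. u * (poisson_weight u k * real k + poisson_weight u k)) sums (u * (u + 1))"
    by (intro sums_mult sums_add sums_poisson_weight sums_poisson_weight_mult)
  moreover have "u * (poisson_weight u k * real k + poisson_weight u k) =
      poisson_weight u (Suc k) * real (Suc k) ^ 2" for k
    by (simp only: power2_eq_square mult.assoc[symmetric] poisson_weight_Suc) (simp add: algebra_simps)
  ultimately have "(\<lambda>k. poisson_weight u (Suc k) * real (Suc k) ^ 2) sums (u^2 + u)"
    by (simp add: power2_eq_square algebra_simps)
  then show ?thesis by (subst (asm) sums_Suc_iff) simp
qed

lemma ctrw_kernel_eq_poisson_mixture:
  "ctrw_kernel p u x = (\<Sum>k. poisson_weight u k * conv_pow p k x)"
  by (simp add: ctrw_kernel_def poisson_weight_def)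

lemma square_summable_if_exponential_moments:
  fixes p :: "int \<Rightarrow> real" and \<delta> :: real
  assumes nonneg: "\<And>x. 0 \<le> p x" and "\<delta> > 0"
    and exp_pos: "(\<lambda>x. exp (\<delta> * real_of_int x) * p x) summable_on UNIV"
    and exp_neg: "(\<lambda>x. exp (- \<delta> * real_of_int x) * p x) summable_on UNIV"
  shows "(\<lambda>x. real_of_int x ^ 2 * p x) summable_on UNIV"
proof (rule summable_on_comparison_test)
  show "(\<lambda>x. (2 / \<delta>^2) * (exp (\<delta> * real_of_int x) * p x + exp (- \<delta> * real_of_int x) * p x))
      summable_on UNIV"
    by (intro summable_on_cmult_right summable_on_add exp_pos exp_neg)
  fix x :: int
  show "0 \<le> real_of_int x ^ 2 * p x" using nonneg[of x] by simp
  show "real_of_int x ^ 2 * p x \<le>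
      (2 / \<delta>^2) * (exp (\<delta> * real_of_int x) * p x + exp (- \<delta> * real_of_int x) * p x)"
  proof -
    define y where "y = \<delta> * \<bar>real_of_int x\<bar>"
    have "0 \<le> y" using \<open>\<delta> > 0\<close> by (simp add: y_def)
    then have "y^2 / 2 \<le> exp y" using exp_lower_Taylor_quadratic[of y] by linarith
    also have "exp y \<le> exp (\<delta> * real_of_int x) + exp (- \<delta> * real_of_int x)"
      by (cases "x \<ge> 0") (auto simp: y_def abs_if add_increasing add_increasing2)
    finally have "real_of_int x ^ 2 \<le> (2 / \<delta>^2) * (exp (\<delta> * real_of_int x) + exp (- \<delta> * real_of_int x))"
      using \<open>\<delta> > 0\<close> by (simp add: y_def field_simps)
    from mult_right_mono[OF this nonneg[of x]] show ?thesis
      by (simp add: algebra_simps)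
  qed
qed

locale finite_variance_kernel =
  fixes p :: "int \<Rightarrow> real"
  assumes prob_kernel: "prob_kernel p"
    and square_summable: "(\<lambda>x. real_of_int x ^ 2 * p x) summable_on UNIV"
begin

lemma nonneg: "0 \<le> p x" and has_sum_1: "(p has_sum 1) UNIV"
  using prob_kernel by (auto simp: prob_kernel_def)

lemma summable: "p summable_on UNIV"
  using has_sum_1 by (auto simp: summable_on_def)

lemma mean_summable: "(\<lambda>x. real_of_int x * p x) summable_on UNIV"
proof (rule abs_summable_summable, rule Infinite_Sum.abs_summable_on_comparison_test')
  show "(\<lambda>x. real_of_int x ^ 2 * p x + p x) summable_on UNIV"
    by (intro summable_on_add square_summable summable)
  fix x :: int
  have "\<bar>real_of_int x\<bar> \<le> real_of_int x ^ 2 + 1"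
  proof (cases "\<bar>real_of_int x\<bar> \<le> 1")
    case False
    then have "\<bar>real_of_int x\<bar> * 1 \<le> \<bar>real_of_int x\<bar> * \<bar>real_of_int x\<bar>"
      by (intro mult_left_mono) auto
    then show ?thesis by (simp add: power2_eq_square)
  qed (simp add: add_increasing)
  from mult_right_mono[OF this nonneg[of x]]
  show "norm (real_of_int x * p x) \<le> real_of_int x ^ 2 * p x + p x"
    using nonneg[of x] by (simp add: abs_mult algebra_simps)
qed

definition mean :: real where "mean = (\<Sum>\<^sub>\<infinity>x. real_of_int x * p x)"

definition second_moment :: real where "second_moment = (\<Sum>\<^sub>\<infinity>x. real_of_int x ^ 2 * p x)"

definition variance :: real where "variance = second_moment - mean^2"

lemma has_sum_shifted_square:
  "((\<lambda>y. p y * (real_of_int y + c)^2) has_sum (second_moment + 2 * c * mean + c^2)) UNIV"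
proof -
  have "((\<lambda>y. real_of_int y ^ 2 * p y + (2 * c) * (real_of_int y * p y) + c^2 * p y) has_sum
          (second_moment + (2 * c) * mean + c^2 * 1)) UNIV"
    unfolding second_moment_def mean_def
    by (intro has_sum_add has_sum_cmult_right has_sum_infsum square_summable mean_summable has_sum_1)
  then show ?thesis by (simp add: power2_eq_square algebra_simps)
qed

lemma variance_nonneg: "0 \<le> variance"
proof -
  have "0 \<le> second_moment + 2 * (- mean) * mean + (- mean)^2"
    using has_sum_shifted_square[of "- mean"] by (rule has_sum_nonneg) (simp add: nonneg)
  then show ?thesis by (simp add: variance_def power2_eq_square)
qed

lemma second_moment_nonneg: "0 \<le> second_moment"
  using variance_nonneg zero_le_power2[of mean] unfolding variance_def by linarith

lemma conv_pow_Suc_has_sum: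
  assumes "\<And>x. 0 \<le> conv_pow p k x" and "\<And>x. conv_pow p k x \<le> 1"
  shows "((\<lambda>y. p y * conv_pow p k (x - y)) has_sum conv_pow p (Suc k) x) UNIV"
proof -
  have "(\<lambda>y. p y * conv_pow p k (x - y)) summable_on UNIV"
    by (rule summable_on_comparison_test[OF summable]) (use assms nonneg in \<open>auto intro: mult_left_le\<close>)
  then show ?thesis by simp
qed

lemma nn_integral_conv_pow_Suc:
  fixes g :: "int \<Rightarrow> ennreal"
  assumes nonneg_k: "\<And>x. 0 \<le> conv_pow p k x" and "\<And>x. conv_pow p k x \<le> 1"
  shows "(\<integral>\<^sup>+x. ennreal (conv_pow p (Suc k) x) * g x \<partial>count_space UNIV) =
    (\<integral>\<^sup>+y. ennreal (p y) * (\<integral>\<^sup>+x. ennreal (conv_pow p k x) * g (x + y) \<partial>count_space UNIV)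
      \<partial>count_space UNIV)"
proof -
  have "ennreal (conv_pow p (Suc k) x) =
      (\<integral>\<^sup>+y. ennreal (p y) * ennreal (conv_pow p k (x - y)) \<partial>count_space UNIV)" for x
    using nn_integral_count_space_eq_has_sum[OF _ conv_pow_Suc_has_sum[OF assms]]
    by (simp add: nonneg nonneg_k ennreal_mult)
  then have "(\<integral>\<^sup>+x. ennreal (conv_pow p (Suc k) x) * g x \<partial>count_space UNIV) =
      (\<integral>\<^sup>+x. \<integral>\<^sup>+y. ennreal (p y) * (ennreal (conv_pow p k (x - y)) * g x)
        \<partial>count_space UNIV \<partial>count_space UNIV)"
    by (simp add: nn_integral_multc[symmetric] mult.assoc)
  also have "\<dots> = (\<integral>\<^sup>+y. \<integral>\<^sup>+x. ennreal (p y) * (ennreal (conv_pow p k (x - y)) * g x)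
      \<partial>count_space UNIV \<partial>count_space UNIV)"
    by (rule nn_integral_count_space_nn_integral) auto
  also have "\<dots> = (\<integral>\<^sup>+y. ennreal (p y) * (\<integral>\<^sup>+x. ennreal (conv_pow p k (x - y)) * g x
      \<partial>count_space UNIV) \<partial>count_space UNIV)"
    by (simp add: nn_integral_cmult)
  also have "\<dots> = (\<integral>\<^sup>+y. ennreal (p y) * (\<integral>\<^sup>+x. ennreal (conv_pow p k x) * g (x + y)
      \<partial>count_space UNIV) \<partial>count_space UNIV)"
  proof (intro nn_integral_cong)
    fix y
    show "ennreal (p y) * (\<integral>\<^sup>+x. ennreal (conv_pow p k (x - y)) * g x \<partial>count_space UNIV) =
        ennreal (p y) * (\<integral>\<^sup>+x. ennreal (conv_pow p k x) * g (x + y) \<partial>count_space UNIV)"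
      using nn_integral_count_space_int_shift[of "\<lambda>x. ennreal (conv_pow p k (x - y)) * g x" y] by simp
  qed
  finally show ?thesis .
qed

lemma conv_pow_prob:
  "(\<forall>x. 0 \<le> conv_pow p k x) \<and> (\<integral>\<^sup>+x. ennreal (conv_pow p k x) \<partial>count_space UNIV) = 1"
proof (induction k)
  case 0
  have "(\<lambda>x. ennreal (conv_pow p 0 x)) = indicator {0}"
    by (auto simp: indicator_def)
  then show ?case by simp
next
  case (Suc k)
  then have nonneg_k: "0 \<le> conv_pow p k x" and mass: "(\<integral>\<^sup>+x. ennreal (conv_pow p k x) \<partial>count_space UNIV) = 1"
    for x by auto
  have le_1: "conv_pow p k x \<le> 1" for x
    using le_nn_integral_count_space[of "\<lambda>x. ennreal (conv_pow p k x)" x] mass nonneg_k by simp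
  have "0 \<le> conv_pow p (Suc k) x" for x
    by (rule has_sum_nonneg[OF conv_pow_Suc_has_sum[OF nonneg_k le_1]]) (simp add: nonneg nonneg_k)
  moreover have "(\<integral>\<^sup>+x. ennreal (conv_pow p (Suc k) x) \<partial>count_space UNIV) = 1"
    using nn_integral_conv_pow_Suc[OF nonneg_k le_1, of "\<lambda>_. 1"] mass
      nn_integral_count_space_eq_has_sum[OF nonneg has_sum_1]
    by simp
  ultimately show ?case by blast
qed

lemma conv_pow_nonneg: "0 \<le> conv_pow p k x"
  using conv_pow_prob by blast

lemma nn_integral_conv_pow: "(\<integral>\<^sup>+x. ennreal (conv_pow p k x) \<partial>count_space UNIV) = 1"
  using conv_pow_prob by blast

lemma conv_pow_le_1: "conv_pow p k x \<le> 1"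
  using le_nn_integral_count_space[of "\<lambda>x. ennreal (conv_pow p k x)" x] nn_integral_conv_pow
    conv_pow_nonneg by simp

lemma nn_integral_conv_pow_square:
  "(\<integral>\<^sup>+x. ennreal (conv_pow p k x * (real_of_int x - v)^2) \<partial>count_space UNIV) =
    ennreal (real k * variance + (real k * mean - v)^2)"
proof (induction k arbitrary: v)
  case 0
  have "(\<lambda>x. ennreal (conv_pow p 0 x * (real_of_int x - v)^2)) = (\<lambda>x. ennreal (v^2) * indicator {0} x)"
    by (auto simp: indicator_def)
  then show ?case by simp
next
  case (Suc k)
  have "(\<integral>\<^sup>+x. ennreal (conv_pow p (Suc k) x * (real_of_int x - v)^2) \<partial>count_space UNIV) =
      (\<integral>\<^sup>+x. ennreal (conv_pow p (Suc k) x) * ennreal ((real_of_int x - v)^2) \<partial>count_space UNIV)"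
    by (intro nn_integral_cong) (simp only: ennreal_mult[OF conv_pow_nonneg zero_le_power2])
  also have "\<dots> = (\<integral>\<^sup>+y. ennreal (p y) * (\<integral>\<^sup>+x. ennreal (conv_pow p k x *
      (real_of_int x - (v - real_of_int y))^2) \<partial>count_space UNIV) \<partial>count_space UNIV)"
    by (simp add: nn_integral_conv_pow_Suc conv_pow_nonneg conv_pow_le_1 ennreal_mult algebra_simps
        del: conv_pow.simps)
  also have "\<dots> = (\<integral>\<^sup>+y. ennreal (p y * (real k * variance +
      (real_of_int y + (real k * mean - v))^2)) \<partial>count_space UNIV)"
  proof (intro nn_integral_cong)
    fix y :: int
    have "real k * mean - (v - real_of_int y) = real_of_int y + (real k * mean - v)" by simp
    then show "ennreal (p y) * (\<integral>\<^sup>+x. ennreal (conv_pow p k x *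
        (real_of_int x - (v - real_of_int y))^2) \<partial>count_space UNIV) =
      ennreal (p y * (real k * variance + (real_of_int y + (real k * mean - v))^2))"
      by (simp only: Suc.IH) (simp add: nonneg variance_nonneg flip: ennreal_mult del: ennreal_plus)
  qed
  also have "\<dots> = ennreal (real (Suc k) * variance + (real (Suc k) * mean - v)^2)"
  proof (rule nn_integral_count_space_eq_has_sum)
    show "0 \<le> p y * (real k * variance + (real_of_int y + (real k * mean - v))^2)" for y
      by (simp add: nonneg variance_nonneg)
    have "((\<lambda>y. (real k * variance) * p y + p y * (real_of_int y + (real k * mean - v))^2) has_sum
        ((real k * variance) * 1 + (second_moment + 2 * (real k * mean - v) * mean +
          (real k * mean - v)^2))) UNIV"
      by (intro has_sum_add has_sum_cmult_right has_sum_1 has_sum_shifted_square)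
    then show "((\<lambda>y. p y * (real k * variance + (real_of_int y + (real k * mean - v))^2)) has_sum
        (real (Suc k) * variance + (real (Suc k) * mean - v)^2)) UNIV"
      by (simp add: variance_def power2_eq_square algebra_simps)
  qed
  finally show ?case .
qed

lemma summable_poisson_mixture:
  assumes "0 \<le> u"
  shows "summable (\<lambda>k. poisson_weight u k * conv_pow p k x)"
proof (rule summable_comparison_test'[where g = "poisson_weight u" and N = 0])
  show "summable (poisson_weight u)" using sums_poisson_weight by (rule sums_summable)
  show "norm (poisson_weight u k * conv_pow p k x) \<le> poisson_weight u k" for k
    using poisson_weight_nonneg[OF assms] conv_pow_nonneg conv_pow_le_1
    by (simp add: abs_mult mult_left_le)
qed

lemma ctrw_kernel_nonneg: "0 \<le> u \<Longrightarrow> 0 \<le> ctrw_kernel p u x"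
  unfolding ctrw_kernel_eq_poisson_mixture
  by (intro suminf_nonneg summable_poisson_mixture mult_nonneg_nonneg poisson_weight_nonneg conv_pow_nonneg)

lemma nn_integral_ctrw_kernel_mixture:
  fixes q :: "int \<Rightarrow> real" and m :: "nat \<Rightarrow> real"
  assumes "0 \<le> u" and q_nonneg: "\<And>x. 0 \<le> q x" and m_nonneg: "\<And>k. 0 \<le> m k"
    and conv_pow_moment: "\<And>k. (\<integral>\<^sup>+x. ennreal (conv_pow p k x * q x) \<partial>count_space UNIV) = ennreal (m k)"
    and "(\<lambda>k. poisson_weight u k * m k) sums a"
  shows "(\<integral>\<^sup>+x. ennreal (ctrw_kernel p u x * q x) \<partial>count_space UNIV) = ennreal a"
proof -
  have w_nonneg: "0 \<le> poisson_weight u k" for k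
    using \<open>0 \<le> u\<close> by (rule poisson_weight_nonneg)
  have "ennreal (ctrw_kernel p u x * q x) = (\<Sum>k. ennreal (poisson_weight u k * (conv_pow p k x * q x)))"
    for x
  proof -
    have "ctrw_kernel p u x * q x = (\<Sum>k. poisson_weight u k * (conv_pow p k x * q x))"
      unfolding ctrw_kernel_eq_poisson_mixture
      using suminf_mult2[OF summable_poisson_mixture[OF \<open>0 \<le> u\<close>]] by (simp add: mult.assoc)
    then show ?thesis
      using summable_mult2[OF summable_poisson_mixture[OF \<open>0 \<le> u\<close>], of x "q x"]
      by (simp add: suminf_ennreal2 mult.assoc w_nonneg conv_pow_nonneg q_nonneg)
  qed
  then have "(\<integral>\<^sup>+x. ennreal (ctrw_kernel p u x * q x) \<partial>count_space UNIV) =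
      (\<Sum>k. \<integral>\<^sup>+x. ennreal (poisson_weight u k) * ennreal (conv_pow p k x * q x) \<partial>count_space UNIV)"
    by (simp add: nn_integral_suminf ennreal_mult w_nonneg conv_pow_nonneg q_nonneg)
  also have "\<dots> = (\<Sum>k. ennreal (poisson_weight u k * m k))"
    by (simp add: nn_integral_cmult conv_pow_moment ennreal_mult w_nonneg m_nonneg)
  also have "\<dots> = ennreal a"
    using assms(5) by (simp add: suminf_ennreal2 sums_iff w_nonneg m_nonneg)
  finally show ?thesis .
qed

lemma nn_integral_ctrw_kernel:
  "0 \<le> u \<Longrightarrow> (\<integral>\<^sup>+x. ennreal (ctrw_kernel p u x) \<partial>count_space UNIV) = 1"
  using nn_integral_ctrw_kernel_mixture[of u "\<lambda>_. 1" "\<lambda>_. 1" 1] nn_integral_conv_pow sums_poisson_weight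
  by simp

lemma nn_integral_ctrw_kernel_centered_square:
  assumes "0 \<le> u"
  shows "(\<integral>\<^sup>+x. ennreal (ctrw_kernel p u x * (real_of_int x - u * mean)^2) \<partial>count_space UNIV) =
    ennreal (u * second_moment)"
proof (rule nn_integral_ctrw_kernel_mixture[OF assms])
  show "(\<integral>\<^sup>+x. ennreal (conv_pow p k x * (real_of_int x - u * mean)^2) \<partial>count_space UNIV) =
      ennreal (real k * variance + (real k * mean - u * mean)^2)" for k
    by (rule nn_integral_conv_pow_square)
  show "0 \<le> real k * variance + (real k * mean - u * mean)^2" for k
    using variance_nonneg by simp
  have "(\<lambda>k. variance * (poisson_weight u k * real k) + mean^2 * (poisson_weight u k * real k ^ 2)
      - (2 * u * mean^2) * (poisson_weight u k * real k) + (u^2 * mean^2) * poisson_weight u k)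
    sums (variance * u + mean^2 * (u^2 + u) - (2 * u * mean^2) * u + (u^2 * mean^2) * 1)"
    by (intro sums_add sums_diff sums_mult sums_poisson_weight sums_poisson_weight_mult
        sums_poisson_weight_square)
  then show "(\<lambda>k. poisson_weight u k * (real k * variance + (real k * mean - u * mean)^2))
      sums (u * second_moment)"
    by (simp add: variance_def power2_eq_square algebra_simps)
qed simp

lemma nn_integral_ctrw_kernel_abs_le:
  assumes "0 \<le> u" and close_to_mean: "\<bar>real_of_int D - u * mean\<bar> \<le> 1"
  shows "(\<integral>\<^sup>+d. ennreal (ctrw_kernel p u d * \<bar>real_of_int d - real_of_int D\<bar>) \<partial>count_space UNIV)
    \<le> ennreal ((second_moment + 2) * (sqrt u + 1))"
proof -
  define r where "r = sqrt u + 1"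
  have "1 \<le> r" using assms(1) by (simp add: r_def)
  have "(\<integral>\<^sup>+d. ennreal (ctrw_kernel p u d * \<bar>real_of_int d - real_of_int D\<bar>) \<partial>count_space UNIV)
      \<le> (\<integral>\<^sup>+d. ennreal (1 / r) * ennreal (ctrw_kernel p u d * (real_of_int d - u * mean)^2)
             + ennreal (1 / r + r / 2) * ennreal (ctrw_kernel p u d) \<partial>count_space UNIV)"
  proof (intro nn_integral_mono)
    fix d :: int
    have "\<bar>real_of_int d - real_of_int D\<bar> \<le> (real_of_int d - u * mean)^2 / r + 1 / r + r / 2"
      using abs_le_square_div_add[OF \<open>1 \<le> r\<close>, of "u * mean - real_of_int D" "real_of_int d - real_of_int D"]
        close_to_mean by (simp add: abs_minus_commute)
    from mult_left_mono[OF this ctrw_kernel_nonneg[OF assms(1)]]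
    show "ennreal (ctrw_kernel p u d * \<bar>real_of_int d - real_of_int D\<bar>)
        \<le> ennreal (1 / r) * ennreal (ctrw_kernel p u d * (real_of_int d - u * mean)^2)
             + ennreal (1 / r + r / 2) * ennreal (ctrw_kernel p u d)"
      using \<open>1 \<le> r\<close> ctrw_kernel_nonneg[OF assms(1), of d]
      by (simp add: algebra_simps flip: ennreal_mult ennreal_plus)
  qed
  also have "\<dots> = ennreal (u * second_moment / r + (1 / r + r / 2))"
    using \<open>1 \<le> r\<close> assms(1) second_moment_nonneg
    by (simp add: nn_integral_add nn_integral_cmult nn_integral_ctrw_kernel_centered_square nn_integral_ctrw_kernel
        flip: ennreal_mult ennreal_plus)
  also have "\<dots> \<le> ennreal ((second_moment + 2) * r)"
  proof (intro ennreal_leI)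
    have "u \<le> r * r" using assms(1) by (simp add: r_def algebra_simps)
    then have "u / r \<le> r" using \<open>1 \<le> r\<close> by (simp add: field_simps)
    then have "u * second_moment / r \<le> second_moment * r"
      using second_moment_nonneg by (metis mult.commute mult_left_mono times_divide_eq_right)
    moreover have "1 / r \<le> 1" using \<open>1 \<le> r\<close> by simp
    ultimately show "u * second_moment / r + (1 / r + r / 2) \<le> (second_moment + 2) * r"
      using \<open>1 \<le> r\<close> unfolding distrib_right by linarith
  qed
  finally show ?thesis by (simp add: r_def)
qed

end

lemma ctrw_measurable:
  assumes "ctrw M p m W"
  shows "(\<lambda>\<omega>. W \<omega> t) \<in> M \<rightarrow>\<^sub>M count_space UNIV"
  using measurable_compose[OF _ measurable_component_singleton[of t UNIV "\<lambda>_. count_space UNIV"]] assms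
  by (auto simp: ctrw_def)

lemma emeasure_ctrw_increments:
  assumes "prob_space M" and W: "ctrw M p m W" and "0 \<le> S" "S \<le> T"
  shows "emeasure M {\<omega>\<in>space M. W \<omega> S - W \<omega> 0 = i \<and> W \<omega> T - W \<omega> S = d} =
    ennreal (ctrw_kernel p S i * ctrw_kernel p (T - S) d)"
proof -
  interpret prob_space M by fact
  define Y where "Y j \<omega> = W \<omega> ([0, S, T] ! Suc j) - W \<omega> ([0, S, T] ! j)" for j \<omega>
  define A where "A j = (if j = 0 then {i} else {d})" for j :: nat
  have "sorted [0, S, T]" "\<forall>t\<in>set [0, S, T]. 0 \<le> t"
    using \<open>0 \<le> S\<close> \<open>S \<le> T\<close> by auto
  with W have "indep_vars (\<lambda>_. count_space UNIV) Y {..<length [0, S, T] - 1}"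
    unfolding ctrw_def Y_def by blast
  then have "prob (\<Inter>j\<in>{0, 1}. Y j -` A j \<inter> space M) = (\<Prod>j\<in>{0, 1}. prob (Y j -` A j \<inter> space M))"
    by (rule indep_varsD) auto
  moreover have marginal: "prob {\<omega>\<in>space M. W \<omega> t - W \<omega> s = x} = ctrw_kernel p (t - s) x"
    if "0 \<le> s" "s \<le> t" for s t x
    using W that unfolding ctrw_def by blast
  moreover have "(\<Inter>j\<in>{0, 1}. Y j -` A j \<inter> space M) =
      {\<omega>\<in>space M. W \<omega> S - W \<omega> 0 = i \<and> W \<omega> T - W \<omega> S = d}"
    by (auto simp: Y_def A_def)
  moreover have "Y 0 -` A 0 \<inter> space M = {\<omega>\<in>space M. W \<omega> S - W \<omega> 0 = i}"
    and "Y 1 -` A 1 \<inter> space M = {\<omega>\<in>space M. W \<omega> T - W \<omega> S = d}"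
    by (auto simp: Y_def A_def)
  ultimately show ?thesis
    using marginal[of 0 S i] marginal[of S T d] \<open>0 \<le> S\<close> \<open>S \<le> T\<close>
    by (simp add: emeasure_eq_measure)
qed

lemma nn_integral_ctrw_two_times:
  fixes f :: "int \<Rightarrow> int \<Rightarrow> ennreal"
  assumes "prob_space M" and W: "ctrw M p m W" and "0 \<le> S" "S \<le> T"
  shows "(\<integral>\<^sup>+\<omega>. f (W \<omega> S) (W \<omega> T) \<partial>M) =
    (\<integral>\<^sup>+i. \<integral>\<^sup>+d. ennreal (ctrw_kernel p S i * ctrw_kernel p (T - S) d) * f (m + i) (m + i + d)
      \<partial>count_space UNIV \<partial>count_space UNIV)"
proof -
  interpret prob_space M by fact
  note [measurable] = ctrw_measurable[OF W]
  define Z where "Z \<omega> = (W \<omega> S - W \<omega> 0, W \<omega> T - W \<omega> S)" for \<omega>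
  have [measurable]: "Z \<in> M \<rightarrow>\<^sub>M count_space UNIV"
    unfolding Z_def by measurable
  have "AE \<omega> in M. W \<omega> 0 = m"
    using W by (simp add: ctrw_def)
  then have "(\<integral>\<^sup>+\<omega>. f (W \<omega> S) (W \<omega> T) \<partial>M) =
      (\<integral>\<^sup>+\<omega>. (\<lambda>(i, d). f (m + i) (m + i + d)) (Z \<omega>) * indicator (space M) \<omega> \<partial>M)"
    by (intro nn_integral_cong_AE) (auto simp: Z_def)
  also have "\<dots> = (\<integral>\<^sup>+z. (\<lambda>(i, d). f (m + i) (m + i + d)) z * emeasure M {\<omega>\<in>space M. Z \<omega> = z}
      \<partial>count_space UNIV)"
    using nn_integral_discrete_indicator[of Z M "space M" "\<lambda>(i, d). f (m + i) (m + i + d)"]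
    by (simp add: Collect_conj_eq Int_absorb2)
  also have "\<dots> = (\<integral>\<^sup>+z. (\<lambda>(i, d). ennreal (ctrw_kernel p S i * ctrw_kernel p (T - S) d) *
      f (m + i) (m + i + d)) z \<partial>count_space UNIV)"
    by (intro nn_integral_cong)
       (auto simp: Z_def emeasure_ctrw_increments[OF \<open>prob_space M\<close> W \<open>0 \<le> S\<close> \<open>S \<le> T\<close>] mult.commute)
  finally show ?thesis by (simp add: nn_integral_fst_count_space[symmetric])
qed

(* The event A (first disjunct) or B (second) for a particle at x at time ns and at y at time nt,
   where a1 = [n ybar] + [nbs] and a2 = [n ybar] + [nbt]. *)
definition crosses :: "int \<Rightarrow> int \<Rightarrow> int \<Rightarrow> int \<Rightarrow> bool" where
  "crosses a1 a2 x y \<longleftrightarrow> (a1 < x \<and> y \<le> a2) \<or> (x \<le> a1 \<and> a2 < y)"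

definition crossing_prob :: "(int \<Rightarrow> real) \<Rightarrow> int \<Rightarrow> real \<Rightarrow> real \<Rightarrow> int \<Rightarrow> int \<Rightarrow> ennreal" where
  "crossing_prob p m S T a1 a2 = (\<integral>\<^sup>+i. \<integral>\<^sup>+d. ennreal (ctrw_kernel p S i * ctrw_kernel p (T - S) d) *
     of_bool (crosses a1 a2 (m + i) (m + i + d)) \<partial>count_space UNIV \<partial>count_space UNIV)"

lemma nn_integral_crosses:
  "(\<integral>\<^sup>+z. of_bool (crosses a1 a2 z (z + d)) \<partial>count_space UNIV) = ennreal \<bar>real_of_int (d - (a2 - a1))\<bar>"
proof -
  have "{z. crosses a1 a2 z (z + d)} = (if d \<le> a2 - a1 then {a1<..a2 - d} else {a2 - d<..a1})"
    by (auto simp: crosses_def)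
  then have "emeasure (count_space UNIV) {z. crosses a1 a2 z (z + d)} = ennreal \<bar>real_of_int (d - (a2 - a1))\<bar>"
    by (simp add: ennreal_of_nat_eq_real_of_nat)
  moreover have "(\<lambda>z. of_bool (crosses a1 a2 z (z + d)) :: ennreal) = indicator {z. crosses a1 a2 z (z + d)}"
    by (auto simp: indicator_def)
  ultimately show ?thesis by simp
qed

lemma emeasure_ctrw_crosses:
  assumes "prob_space M" and W: "ctrw M p m W" and "0 \<le> S" "S \<le> T"
  shows "emeasure M {\<omega>\<in>space M. crosses a1 a2 (W \<omega> S) (W \<omega> T)} = crossing_prob p m S T a1 a2"
proof -
  note [measurable] = ctrw_measurable[OF W]
  have "{\<omega>\<in>space M. crosses a1 a2 (W \<omega> S) (W \<omega> T)} \<in> sets M" by measurable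
  then have "emeasure M {\<omega>\<in>space M. crosses a1 a2 (W \<omega> S) (W \<omega> T)} =
      (\<integral>\<^sup>+\<omega>. indicator {\<omega>\<in>space M. crosses a1 a2 (W \<omega> S) (W \<omega> T)} \<omega> \<partial>M)"
    by simp
  also have "\<dots> = (\<integral>\<^sup>+\<omega>. of_bool (crosses a1 a2 (W \<omega> S) (W \<omega> T)) \<partial>M)"
    by (intro nn_integral_cong) (simp add: indicator_def)
  also have "\<dots> = crossing_prob p m S T a1 a2"
    unfolding crossing_prob_def by (rule nn_integral_ctrw_two_times) fact+
  finally show ?thesis .
qed

context finite_variance_kernel
begin

(* Summing over the starting point m turns the crossing probability into E |D - (a2 - a1)|:
   a jump by d crosses from exactly |d - (a2 - a1)| starting points. *)
lemma nn_integral_crossing_prob_le: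
  assumes "0 \<le> S" "S \<le> T" and close_to_mean: "\<bar>real_of_int (a2 - a1) - (T - S) * mean\<bar> \<le> 1"
  shows "(\<integral>\<^sup>+m. crossing_prob p m S T a1 a2 \<partial>count_space UNIV)
    \<le> ennreal ((second_moment + 2) * (sqrt (T - S) + 1))"
proof -
  define u where "u = T - S"
  have "0 \<le> u" using \<open>S \<le> T\<close> by (simp add: u_def)
  let ?F = "\<lambda>m i d. ennreal (ctrw_kernel p S i * ctrw_kernel p u d) *
      of_bool (crosses a1 a2 (m + i) (m + i + d))"
  have "(\<integral>\<^sup>+m. crossing_prob p m S T a1 a2 \<partial>count_space UNIV) =
      (\<integral>\<^sup>+m. \<integral>\<^sup>+i. \<integral>\<^sup>+d. ?F m i d \<partial>count_space UNIV \<partial>count_space UNIV \<partial>count_space UNIV)"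
    by (simp add: crossing_prob_def u_def)
  also have "\<dots> =
      (\<integral>\<^sup>+i. \<integral>\<^sup>+m. \<integral>\<^sup>+d. ?F m i d \<partial>count_space UNIV \<partial>count_space UNIV \<partial>count_space UNIV)"
    by (rule nn_integral_count_space_nn_integral) auto
  also have "\<dots> = (\<integral>\<^sup>+i. \<integral>\<^sup>+d. \<integral>\<^sup>+m. ?F m i d \<partial>count_space UNIV \<partial>count_space UNIV \<partial>count_space UNIV)"
    by (rule nn_integral_cong, rule nn_integral_count_space_nn_integral) auto
  also have "\<dots> = (\<integral>\<^sup>+i. ennreal (ctrw_kernel p S i) * (\<integral>\<^sup>+d. ennreal (ctrw_kernel p u d *
      \<bar>real_of_int d - real_of_int (a2 - a1)\<bar>) \<partial>count_space UNIV) \<partial>count_space UNIV)"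
  proof (intro nn_integral_cong)
    fix i :: int
    have "(\<integral>\<^sup>+m. of_bool (crosses a1 a2 (m + i) (m + i + d)) \<partial>count_space UNIV) =
        ennreal \<bar>real_of_int d - real_of_int (a2 - a1)\<bar>" for d
      using nn_integral_count_space_int_shift[of "\<lambda>z. of_bool (crosses a1 a2 z (z + d))" i]
        nn_integral_crosses[of a1 a2 d] by (simp add: add.assoc)
    then show "(\<integral>\<^sup>+d. \<integral>\<^sup>+m. ennreal (ctrw_kernel p S i * ctrw_kernel p u d) *
        of_bool (crosses a1 a2 (m + i) (m + i + d)) \<partial>count_space UNIV \<partial>count_space UNIV) =
      ennreal (ctrw_kernel p S i) * (\<integral>\<^sup>+d. ennreal (ctrw_kernel p u d *
        \<bar>real_of_int d - real_of_int (a2 - a1)\<bar>) \<partial>count_space UNIV)"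
      using ctrw_kernel_nonneg \<open>0 \<le> S\<close> \<open>0 \<le> u\<close>
      by (simp add: nn_integral_cmult ennreal_mult mult.assoc)
  qed
  also have "\<dots> = (\<integral>\<^sup>+d. ennreal (ctrw_kernel p u d * \<bar>real_of_int d - real_of_int (a2 - a1)\<bar>)
      \<partial>count_space UNIV)"
    by (simp add: nn_integral_multc nn_integral_ctrw_kernel \<open>0 \<le> S\<close>)
  also have "\<dots> \<le> ennreal ((second_moment + 2) * (sqrt u + 1))"
    using nn_integral_ctrw_kernel_abs_le[OF \<open>0 \<le> u\<close> close_to_mean[folded u_def]] .
  finally show ?thesis by (simp add: u_def)
qed

end

lemma evA_Un_evB:
  "evA M Z n y b s t \<union> evB M Z n y b s t = {\<omega>\<in>space M.
    crosses (\<lfloor>real n * y\<rfloor> + \<lfloor>real n * b * s\<rfloor>) (\<lfloor>real n * y\<rfloor> + \<lfloor>real n * b * t\<rfloor>)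
      (Z \<omega> (real n * s)) (Z \<omega> (real n * t))}"
  by (auto simp: evA_def evB_def crosses_def)

lemma
  assumes "ctrw M p m Z"
  shows sets_evA: "evA M Z n y b s t \<in> sets M" and sets_evB: "evB M Z n y b s t \<in> sets M"
  using ctrw_measurable[OF assms] unfolding evA_def evB_def by measurable

definition indep_occupations_walks ::
    "'a measure \<Rightarrow> (int \<Rightarrow> 'a \<Rightarrow> nat) \<Rightarrow> (int \<Rightarrow> nat \<Rightarrow> 'a \<Rightarrow> real \<Rightarrow> int) \<Rightarrow> bool" where
  "indep_occupations_walks M eta X \<longleftrightarrow> prob_space.indep_sets M
     (\<lambda>i. case i of
             Inl m \<Rightarrow> {eta m -` A \<inter> space M | A. A \<in> sets (count_space UNIV)}
           | Inr (m, j) \<Rightarrow> {X m j -` A \<inter> space M | A. A \<in> sets (\<Pi>\<^sub>M u\<in>UNIV. count_space UNIV)})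
     (range Inl \<union> {Inr (m, j) | m j. 1 \<le> j})"

lemma emeasure_occupation_crossing_indep:
  fixes eta :: "int \<Rightarrow> 'a \<Rightarrow> nat" and X :: "int \<Rightarrow> nat \<Rightarrow> 'a \<Rightarrow> real \<Rightarrow> int"
  assumes "prob_space M"
    and indep: "indep_occupations_walks M eta X"
    and "1 \<le> j" and X: "ctrw M p m (X m j)"
  shows "emeasure M ({\<omega>\<in>space M. eta m \<omega> = v} \<inter> (evA M (X m j) n y b s t \<union> evB M (X m j) n y b s t)) =
    emeasure M {\<omega>\<in>space M. eta m \<omega> = v} * emeasure M (evA M (X m j) n y b s t \<union> evB M (X m j) n y b s t)"
proof -
  interpret prob_space M by fact
  let ?P = "\<Pi>\<^sub>M u\<in>(UNIV :: real set). count_space (UNIV :: int set)"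
  define crossing where "crossing = {f \<in> space ?P.
    crosses (\<lfloor>real n * y\<rfloor> + \<lfloor>real n * b * s\<rfloor>) (\<lfloor>real n * y\<rfloor> + \<lfloor>real n * b * t\<rfloor>)
      (f (real n * s)) (f (real n * t))}"
  have "crossing \<in> sets ?P" unfolding crossing_def by measurable
  have "X m j \<in> M \<rightarrow>\<^sub>M ?P" using X by (simp add: ctrw_def)
  then have crossing_eq: "evA M (X m j) n y b s t \<union> evB M (X m j) n y b s t = X m j -` crossing \<inter> space M"
    by (auto simp: evA_Un_evB crossing_def dest: measurable_space)
  have "prob (eta m -` {v} \<inter> space M \<inter> (X m j -` crossing \<inter> space M)) =
      prob (eta m -` {v} \<inter> space M) * prob (X m j -` crossing \<inter> space M)"
    by (rule indep_setsD2[OF indep[unfolded indep_occupations_walks_def], of "Inl m" "Inr (m, j)"])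
       (use \<open>1 \<le> j\<close> \<open>crossing \<in> sets ?P\<close> in auto)
  moreover have "{\<omega>\<in>space M. eta m \<omega> = v} = eta m -` {v} \<inter> space M" by auto
  ultimately show ?thesis
    unfolding crossing_eq by (simp add: emeasure_eq_measure ennreal_mult)
qed

lemma abs_Gm_le:
  assumes "prob_space M" and "evA M (W 1) n y b s t \<in> sets M" "evB M (W 1) n y b s t \<in> sets M"
  shows "\<bar>Gm M E W n y b s t \<omega>\<bar> \<le>
    (\<Sum>j = 1..E \<omega>. indicator (evA M (W j) n y b s t \<union> evB M (W j) n y b s t) \<omega>) +
    (\<integral>\<omega>'. real (E \<omega>') \<partial>M) * measure M (evA M (W 1) n y b s t \<union> evB M (W 1) n y b s t)"
proof -
  interpret prob_space M by fact
  have disjoint: "evA M (W j) n y b s t \<inter> evB M (W j) n y b s t = {}" for j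
    by (auto simp: evA_def evB_def)
  have "\<bar>\<Sum>j = 1..E \<omega>. indicator (evA M (W j) n y b s t) \<omega> - indicator (evB M (W j) n y b s t) \<omega> :: real\<bar>
      \<le> (\<Sum>j = 1..E \<omega>. \<bar>indicator (evA M (W j) n y b s t) \<omega> - indicator (evB M (W j) n y b s t) \<omega> :: real\<bar>)"
    by (rule sum_abs)
  also have "\<dots> \<le> (\<Sum>j = 1..E \<omega>. indicator (evA M (W j) n y b s t \<union> evB M (W j) n y b s t) \<omega>)"
    by (intro sum_mono) (auto simp: indicator_def)
  finally have sum_le: "\<bar>\<Sum>j = 1..E \<omega>. indicator (evA M (W j) n y b s t) \<omega> -
      indicator (evB M (W j) n y b s t) \<omega> :: real\<bar>
    \<le> (\<Sum>j = 1..E \<omega>. indicator (evA M (W j) n y b s t \<union> evB M (W j) n y b s t) \<omega>)" .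
  have "\<bar>measure M (evA M (W 1) n y b s t) - measure M (evB M (W 1) n y b s t)\<bar>
      \<le> measure M (evA M (W 1) n y b s t \<union> evB M (W 1) n y b s t)"
    using finite_measure_Union[OF assms(2,3) disjoint] unfolding abs_le_iff by simp
  then have "\<bar>(\<integral>\<omega>'. real (E \<omega>') \<partial>M) *
      (measure M (evA M (W 1) n y b s t) - measure M (evB M (W 1) n y b s t))\<bar>
    \<le> (\<integral>\<omega>'. real (E \<omega>') \<partial>M) * measure M (evA M (W 1) n y b s t \<union> evB M (W 1) n y b s t)"
    by (simp add: abs_mult mult_left_mono)
  with sum_le show ?thesis
    unfolding Gm_def by linarith
qed

lemma
  fixes E :: "'a \<Rightarrow> nat"
  assumes "prob_space M" and [measurable]: "E \<in> M \<rightarrow>\<^sub>M count_space UNIV"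
    and sixth: "integrable M (\<lambda>\<omega>. real (E \<omega>) ^ 6)" "(\<integral>\<omega>. real (E \<omega>) ^ 6 \<partial>M) \<le> K" and "k \<le> 6"
  shows sixth_moment_bound_nonneg: "0 \<le> K"
    and integral_power_le_sixth_moment: "(\<integral>\<omega>. real (E \<omega>) ^ k \<partial>M) \<le> 1 + K"
    and nn_integral_power_le_sixth_moment: "(\<integral>\<^sup>+\<omega>. ennreal (real (E \<omega>) ^ k) \<partial>M) \<le> ennreal (1 + K)"
proof -
  interpret prob_space M by fact
  have "0 \<le> (\<integral>\<omega>. real (E \<omega>) ^ 6 \<partial>M)" by (intro integral_nonneg_AE) auto
  with sixth(2) show "0 \<le> K" by linarith
  have power_le: "real v ^ k \<le> 1 + real v ^ 6" for v :: nat
    using power_increasing[OF \<open>k \<le> 6\<close>, of "real v"] by (cases "v = 0") (auto simp: power_0_left)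
  have "integrable M (\<lambda>\<omega>. 1 + real (E \<omega>) ^ 6)" using sixth by simp
  then have integrable: "integrable M (\<lambda>\<omega>. real (E \<omega>) ^ k)"
    by (rule Bochner_Integration.integrable_bound) (auto intro: power_le)
  have "(\<integral>\<omega>. real (E \<omega>) ^ k \<partial>M) \<le> (\<integral>\<omega>. 1 + real (E \<omega>) ^ 6 \<partial>M)"
    using integrable sixth by (intro integral_mono power_le) auto
  also have "\<dots> = 1 + (\<integral>\<omega>. real (E \<omega>) ^ 6 \<partial>M)"
    using sixth by (simp add: prob_space)
  finally show integral_le: "(\<integral>\<omega>. real (E \<omega>) ^ k \<partial>M) \<le> 1 + K" using sixth by linarith
  then show "(\<integral>\<^sup>+\<omega>. ennreal (real (E \<omega>) ^ k) \<partial>M) \<le> ennreal (1 + K)"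
    using integrable by (simp add: nn_integral_eq_integral ennreal_leI)
qed

lemma borel_measurable_sum_indicator_upto:
  fixes E :: "'a \<Rightarrow> nat" and C :: "nat \<Rightarrow> 'a set"
  assumes [measurable]: "E \<in> M \<rightarrow>\<^sub>M count_space UNIV" and "\<And>j. 1 \<le> j \<Longrightarrow> C j \<in> sets M"
  shows "(\<lambda>\<omega>. \<Sum>j = 1..E \<omega>. indicator (C j) \<omega> :: real) \<in> borel_measurable M"
proof -
  have [measurable]: "C (Suc j) \<in> sets M" for j using assms(2) by simp
  show ?thesis by (simp add: sum.atLeast1_atMost_eq)
qed

lemma nn_integral_power_mult_thinned_count_le:
  fixes E :: "'a \<Rightarrow> nat" and C :: "nat \<Rightarrow> 'a set"
  assumes [measurable]: "E \<in> M \<rightarrow>\<^sub>M count_space UNIV"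
    and sets: "\<And>j. 1 \<le> j \<Longrightarrow> C j \<in> sets M" and le_R: "\<And>j. 1 \<le> j \<Longrightarrow> emeasure M (C j) \<le> R"
    and indep: "\<And>j v. 1 \<le> j \<Longrightarrow>
      emeasure M ({\<omega>\<in>space M. E \<omega> = v} \<inter> C j) = emeasure M {\<omega>\<in>space M. E \<omega> = v} * emeasure M (C j)"
    and "1 \<le> k"
  shows "(\<integral>\<^sup>+\<omega>. ennreal (real (E \<omega>) ^ (k - 1) * (\<Sum>j = 1..E \<omega>. indicator (C j) \<omega>)) \<partial>M)
    \<le> (\<integral>\<^sup>+\<omega>. ennreal (real (E \<omega>) ^ k) \<partial>M) * R"
proof -
  define g where "g j v = of_bool (j < v) * ennreal (real v ^ (k - 1))" for j v :: nat
  have [measurable]: "C (Suc j) \<in> sets M" for j using sets by simp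
  have as_series: "ennreal (real (E \<omega>) ^ (k - 1) * (\<Sum>j = 1..E \<omega>. indicator (C j) \<omega>)) =
      (\<Sum>j. g j (E \<omega>) * indicator (C (Suc j)) \<omega>)" for \<omega>
  proof -
    have "(\<Sum>j. g j (E \<omega>) * indicator (C (Suc j)) \<omega>) = (\<Sum>j<E \<omega>. g j (E \<omega>) * indicator (C (Suc j)) \<omega>)"
      by (rule suminf_finite) (auto simp: g_def)
    then show ?thesis
      by (simp add: g_def sum.atLeast1_atMost_eq sum_distrib_left ennreal_mult ennreal_of_nat_eq_real_of_nat
          flip: sum_ennreal)
  qed
  have sum_g: "(\<Sum>j. g j v) = ennreal (real v ^ k)" for v
  proof -
    have "(\<Sum>j. g j v) = (\<Sum>j<v. g j v)"
      by (rule suminf_finite) (auto simp: g_def)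
    also have "\<dots> = ennreal (real v * real v ^ (k - 1))"
      by (simp add: g_def ennreal_of_nat_eq_real_of_nat ennreal_mult)
    finally show ?thesis
      using \<open>1 \<le> k\<close> by (simp add: power_eq_if)
  qed
  have "(\<integral>\<^sup>+\<omega>. ennreal (real (E \<omega>) ^ (k - 1) * (\<Sum>j = 1..E \<omega>. indicator (C j) \<omega>)) \<partial>M) =
      (\<Sum>j. \<integral>\<^sup>+\<omega>. g j (E \<omega>) * indicator (C (Suc j)) \<omega> \<partial>M)"
    unfolding as_series by (rule nn_integral_suminf) measurable
  also have "\<dots> = (\<Sum>j. (\<integral>\<^sup>+\<omega>. g j (E \<omega>) \<partial>M) * emeasure M (C (Suc j)))"
    by (simp add: nn_integral_indep_indicator indep)
  also have "\<dots> \<le> (\<Sum>j. (\<integral>\<^sup>+\<omega>. g j (E \<omega>) \<partial>M) * R)"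
    by (intro suminf_le mult_left_mono le_R) auto
  also have "\<dots> = (\<integral>\<^sup>+\<omega>. (\<Sum>j. g j (E \<omega>)) \<partial>M) * R"
    by (simp add: nn_integral_suminf)
  also have "\<dots> = (\<integral>\<^sup>+\<omega>. ennreal (real (E \<omega>) ^ k) \<partial>M) * R"
    by (simp add: sum_g)
  finally show ?thesis .
qed

lemma abs_Gm_power_le:
  fixes M :: "'a measure" and E :: "'a \<Rightarrow> nat" and W :: "nat \<Rightarrow> 'a \<Rightarrow> real \<Rightarrow> int"
    and n :: nat and y b s t :: real
  defines "C j \<equiv> evA M (W j) n y b s t \<union> evB M (W j) n y b s t"
  assumes "prob_space M" and "evA M (W 1) n y b s t \<in> sets M" "evB M (W 1) n y b s t \<in> sets M"
    and "(\<integral>\<omega>. real (E \<omega>) \<partial>M) \<le> L" "1 \<le> L" and "1 \<le> k" "k \<le> 6"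
  shows "\<bar>Gm M E W n y b s t \<omega>\<bar> ^ k \<le>
    64 * (real (E \<omega>) ^ (k - 1) * (\<Sum>j = 1..E \<omega>. indicator (C j) \<omega>) + L ^ 6 * measure M (C 1))"
proof (rule power_le_of_abs_le_add)
  interpret prob_space M by fact
  show "\<bar>Gm M E W n y b s t \<omega>\<bar> \<le> (\<Sum>j = 1..E \<omega>. indicator (C j) \<omega>) + (\<integral>\<omega>. real (E \<omega>) \<partial>M) * measure M (C 1)"
    unfolding C_def by (rule abs_Gm_le) fact+
  have "(\<Sum>j = 1..E \<omega>. indicator (C j) \<omega>) \<le> real (card {1..E \<omega>}) * 1"
    by (intro sum_bounded_above) (auto simp: indicator_def)
  then show "(\<Sum>j = 1..E \<omega>. indicator (C j) \<omega>) \<le> real (E \<omega>)" by simp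
qed (use assms in \<open>auto intro: sum_nonneg integral_nonneg_AE simp: prob_space.prob_le_1\<close>)

lemma nn_integral_Gm_power_le:
  fixes M :: "'a measure" and E :: "'a \<Rightarrow> nat" and W :: "nat \<Rightarrow> 'a \<Rightarrow> real \<Rightarrow> int"
    and n :: nat and y b s t :: real
  defines "C j \<equiv> evA M (W j) n y b s t \<union> evB M (W j) n y b s t"
  assumes "prob_space M" and [measurable]: "E \<in> M \<rightarrow>\<^sub>M count_space UNIV"
    and sets_A: "\<And>j. 1 \<le> j \<Longrightarrow> evA M (W j) n y b s t \<in> sets M"
    and sets_B: "\<And>j. 1 \<le> j \<Longrightarrow> evB M (W j) n y b s t \<in> sets M"
    and le_R: "\<And>j. 1 \<le> j \<Longrightarrow> emeasure M (C j) \<le> R"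
    and indep: "\<And>j v. 1 \<le> j \<Longrightarrow>
      emeasure M ({\<omega>\<in>space M. E \<omega> = v} \<inter> C j) = emeasure M {\<omega>\<in>space M. E \<omega> = v} * emeasure M (C j)"
    and moment_k: "(\<integral>\<^sup>+\<omega>. ennreal (real (E \<omega>) ^ k) \<partial>M) \<le> ennreal L"
    and "(\<integral>\<omega>. real (E \<omega>) \<partial>M) \<le> L" "1 \<le> L" and "1 \<le> k" "k \<le> 6"
  shows "(\<integral>\<^sup>+\<omega>. ennreal (\<bar>Gm M E W n y b s t \<omega>\<bar> ^ k) \<partial>M) \<le> ennreal (64 * (L + L ^ 6)) * R"
proof -
  interpret prob_space M by fact
  define N where "N \<omega> = (\<Sum>j = 1..E \<omega>. indicator (C j) \<omega> :: real)" for \<omega>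
  define q where "q = measure M (C 1)"
  have "ennreal q \<le> R" using le_R[of 1] by (simp add: q_def emeasure_eq_measure)
  have N_nonneg: "0 \<le> N \<omega>" for \<omega> unfolding N_def by (intro sum_nonneg) auto
  have [measurable]: "N \<in> borel_measurable M"
    unfolding N_def using sets_A sets_B by (intro borel_measurable_sum_indicator_upto) (auto simp: C_def)
  have "ennreal (\<bar>Gm M E W n y b s t \<omega>\<bar> ^ k) \<le>
      64 * ennreal (real (E \<omega>) ^ (k - 1) * N \<omega>) + ennreal (64 * L ^ 6) * ennreal q" for \<omega>
  proof -
    have "ennreal (\<bar>Gm M E W n y b s t \<omega>\<bar> ^ k) \<le>
        ennreal (64 * (real (E \<omega>) ^ (k - 1) * N \<omega>) + 64 * L ^ 6 * q)"
      using abs_Gm_power_le[where W = W, OF \<open>prob_space M\<close> sets_A[OF order_refl] sets_B[OF order_refl]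
          \<open>(\<integral>\<omega>. real (E \<omega>) \<partial>M) \<le> L\<close> \<open>1 \<le> L\<close> \<open>1 \<le> k\<close> \<open>k \<le> 6\<close>]
      by (intro ennreal_leI) (simp add: N_def q_def C_def algebra_simps)
    also have "\<dots> = 64 * ennreal (real (E \<omega>) ^ (k - 1) * N \<omega>) + ennreal (64 * L ^ 6) * ennreal q"
      using N_nonneg[of \<omega>] \<open>1 \<le> L\<close> by (simp add: q_def ennreal_mult)
    finally show ?thesis .
  qed
  then have "(\<integral>\<^sup>+\<omega>. ennreal (\<bar>Gm M E W n y b s t \<omega>\<bar> ^ k) \<partial>M) \<le>
      (\<integral>\<^sup>+\<omega>. 64 * ennreal (real (E \<omega>) ^ (k - 1) * N \<omega>) + ennreal (64 * L ^ 6) * ennreal q \<partial>M)"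
    by (intro nn_integral_mono) auto
  also have "\<dots> = 64 * (\<integral>\<^sup>+\<omega>. ennreal (real (E \<omega>) ^ (k - 1) * N \<omega>) \<partial>M) + ennreal (64 * L ^ 6) * ennreal q"
    by (simp add: nn_integral_add nn_integral_cmult emeasure_space_1)
  also have "\<dots> \<le> 64 * ((\<integral>\<^sup>+\<omega>. ennreal (real (E \<omega>) ^ k) \<partial>M) * R) + ennreal (64 * L ^ 6) * R"
    unfolding N_def
    by (intro add_mono mult_left_mono nn_integral_power_mult_thinned_count_le \<open>ennreal q \<le> R\<close>)
       (use \<open>1 \<le> k\<close> in \<open>auto simp: C_def sets_A sets_B le_R[unfolded C_def] indep[unfolded C_def]\<close>)
  also have "\<dots> \<le> 64 * (ennreal L * R) + ennreal (64 * L ^ 6) * R"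
    by (intro add_mono mult_left_mono mult_right_mono moment_k) auto
  also have "\<dots> = ennreal (64 * (L + L ^ 6)) * R"
  proof -
    have "ennreal (64 * (L + L ^ 6)) = 64 * ennreal L + ennreal (64 * L ^ 6)"
      using \<open>1 \<le> L\<close> by (subst distrib_left, subst ennreal_plus) (auto simp: ennreal_mult)
    then show ?thesis by (simp add: distrib_right mult.assoc)
  qed
  finally show ?thesis .
qed

lemma nn_integral_Gm_power_le_crossing:
  fixes M :: "'a measure" and eta :: "int \<Rightarrow> 'a \<Rightarrow> nat" and X :: "int \<Rightarrow> nat \<Rightarrow> 'a \<Rightarrow> real \<Rightarrow> int"
  assumes "prob_space M"
    and walks: "\<And>j. 1 \<le> j \<Longrightarrow> ctrw M p m (X m j)"
    and eta_measurable: "eta m \<in> M \<rightarrow>\<^sub>M count_space UNIV"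
    and indep: "indep_occupations_walks M eta X"
    and sixth: "integrable M (\<lambda>\<omega>. real (eta m \<omega>) ^ 6)" "(\<integral>\<omega>. real (eta m \<omega>) ^ 6 \<partial>M) \<le> K"
    and "0 \<le> s" "s \<le> t" "1 \<le> k" "k \<le> 6"
  shows "(\<integral>\<^sup>+\<omega>. ennreal (\<bar>Gm M (eta m) (X m) n y b s t \<omega>\<bar> ^ k) \<partial>M) \<le>
    ennreal (64 * ((1 + K) + (1 + K)^6)) * crossing_prob p m (real n * s) (real n * t)
      (\<lfloor>real n * y\<rfloor> + \<lfloor>real n * b * s\<rfloor>) (\<lfloor>real n * y\<rfloor> + \<lfloor>real n * b * t\<rfloor>)"
proof (rule nn_integral_Gm_power_le)
  fix j :: nat assume "1 \<le> j"
  show "evA M (X m j) n y b s t \<in> sets M" "evB M (X m j) n y b s t \<in> sets M"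
    using walks[OF \<open>1 \<le> j\<close>] by (rule sets_evA, rule sets_evB)
  show "emeasure M (evA M (X m j) n y b s t \<union> evB M (X m j) n y b s t) \<le> crossing_prob p m (real n * s)
      (real n * t) (\<lfloor>real n * y\<rfloor> + \<lfloor>real n * b * s\<rfloor>) (\<lfloor>real n * y\<rfloor> + \<lfloor>real n * b * t\<rfloor>)"
    unfolding evA_Un_evB using \<open>0 \<le> s\<close> \<open>s \<le> t\<close>
    by (subst emeasure_ctrw_crosses[OF \<open>prob_space M\<close> walks[OF \<open>1 \<le> j\<close>]]) (auto intro: mult_left_mono)
  show "emeasure M ({\<omega>\<in>space M. eta m \<omega> = v} \<inter> (evA M (X m j) n y b s t \<union> evB M (X m j) n y b s t)) =
    emeasure M {\<omega>\<in>space M. eta m \<omega> = v} * emeasure M (evA M (X m j) n y b s t \<union> evB M (X m j) n y b s t)"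
    for v
    by (rule emeasure_occupation_crossing_indep[OF \<open>prob_space M\<close> indep \<open>1 \<le> j\<close> walks[OF \<open>1 \<le> j\<close>]])
next
  show "(\<integral>\<^sup>+\<omega>. ennreal (real (eta m \<omega>) ^ k) \<partial>M) \<le> ennreal (1 + K)"
    using nn_integral_power_le_sixth_moment[OF \<open>prob_space M\<close> eta_measurable sixth \<open>k \<le> 6\<close>] .
  show "(\<integral>\<omega>. real (eta m \<omega>) \<partial>M) \<le> 1 + K"
    using integral_power_le_sixth_moment[OF \<open>prob_space M\<close> eta_measurable sixth, of 1] by simp
  show "1 \<le> 1 + K"
    using sixth_moment_bound_nonneg[OF \<open>prob_space M\<close> eta_measurable sixth \<open>k \<le> 6\<close>] by simp
qed fact+

context finite_variance_kernel
begin

lemma infsum_nn_integral_Gm_power_le: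
  fixes M :: "'a measure" and eta :: "int \<Rightarrow> 'a \<Rightarrow> nat" and X :: "int \<Rightarrow> nat \<Rightarrow> 'a \<Rightarrow> real \<Rightarrow> int"
  assumes "prob_space M"
    and "\<And>m j. 1 \<le> j \<Longrightarrow> ctrw M p m (X m j)" and "\<And>m. eta m \<in> M \<rightarrow>\<^sub>M count_space UNIV"
    and "indep_occupations_walks M eta X"
    and "\<And>m. integrable M (\<lambda>\<omega>. real (eta m \<omega>) ^ 6)" "\<And>m. (\<integral>\<omega>. real (eta m \<omega>) ^ 6 \<partial>M) \<le> K"
    and "0 \<le> s" "s \<le> t" "1 \<le> k" "k \<le> 6"
  shows "(\<Sum>\<^sub>\<infinity>m. \<integral>\<^sup>+\<omega>. ennreal (\<bar>Gm M (eta m) (X m) n ybar mean s t \<omega>\<bar> ^ k) \<partial>M) \<le>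
    ennreal (64 * ((1 + K) + (1 + K)^6) * (second_moment + 2) * (sqrt (real n * (t - s)) + 1))"
proof -
  define a1 where "a1 = \<lfloor>real n * ybar\<rfloor> + \<lfloor>real n * mean * s\<rfloor>"
  define a2 where "a2 = \<lfloor>real n * ybar\<rfloor> + \<lfloor>real n * mean * t\<rfloor>"
  define c where "c = 64 * ((1 + K) + (1 + K)^6)"
  have times_n: "0 \<le> real n * s" "real n * s \<le> real n * t"
    using \<open>0 \<le> s\<close> \<open>s \<le> t\<close> by (auto intro: mult_left_mono)
  have close_to_mean: "\<bar>real_of_int (a2 - a1) - (real n * t - real n * s) * mean\<bar> \<le> 1"
    using abs_floor_diff_le[of "real n * mean * t" "real n * mean * s"]
    by (simp add: a1_def a2_def algebra_simps)
  have "(\<Sum>\<^sub>\<infinity>m. \<integral>\<^sup>+\<omega>. ennreal (\<bar>Gm M (eta m) (X m) n ybar mean s t \<omega>\<bar> ^ k) \<partial>M) \<le>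
      (\<integral>\<^sup>+m. ennreal c * crossing_prob p m (real n * s) (real n * t) a1 a2 \<partial>count_space UNIV)"
    unfolding infsum_ennreal_eq_nn_integral c_def a1_def a2_def
    by (intro nn_integral_mono nn_integral_Gm_power_le_crossing) (use assms in auto)
  also have "\<dots> \<le> ennreal c * ennreal ((second_moment + 2) * (sqrt (real n * t - real n * s) + 1))"
    unfolding nn_integral_cmult[OF borel_measurable_count_space]
    by (rule mult_left_mono[OF nn_integral_crossing_prob_le]) (use close_to_mean times_n in auto)
  also have "\<dots> = ennreal (c * (second_moment + 2) * (sqrt (real n * (t - s)) + 1))"
    using ennreal_mult''[of "(second_moment + 2) * (sqrt (real n * t - real n * s) + 1)" c]
      second_moment_nonneg times_n by (simp add: right_diff_distrib mult.assoc)
  finally show ?thesis by (simp add: c_def)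
qed

end

theorem lemma4p8:
  fixes M :: "'a measure" and p :: "int \<Rightarrow> real" and \<delta> :: real and ybar :: real
    and eta :: "nat \<Rightarrow> int \<Rightarrow> 'a \<Rightarrow> nat"
    and X :: "nat \<Rightarrow> int \<Rightarrow> nat \<Rightarrow> 'a \<Rightarrow> real \<Rightarrow> int"
  assumes "prob_space M"
    and "prob_kernel p"
    and "\<delta> > 0"
    and "\<forall>\<theta>. \<bar>\<theta>\<bar> \<le> \<delta> \<longrightarrow> (\<lambda>x. exp (\<theta> * real_of_int x) * p x) summable_on UNIV"
    and "\<forall>n m j. 1 \<le> j \<longrightarrow> ctrw M p m (X n m j)"
    and "\<forall>n m. eta n m \<in> M \<rightarrow>\<^sub>M count_space UNIV"
    and "\<forall>n. prob_space.indep_sets M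
           (\<lambda>i. case i of
                   Inl m \<Rightarrow> {eta n m -` A \<inter> space M | A. A \<in> sets (count_space UNIV)}
                 | Inr (m, j) \<Rightarrow> {X n m j -` A \<inter> space M | A.
                                   A \<in> sets (\<Pi>\<^sub>M u\<in>UNIV. count_space UNIV)})
           (range Inl \<union> {Inr (m, j) | m j. 1 \<le> j})"
    and "\<forall>n x. integrable M (\<lambda>\<omega>. real (eta n x \<omega>) ^ 6)"
    and "\<exists>K. \<forall>n x. (\<integral>\<omega>. real (eta n x \<omega>) ^ 6 \<partial>M) \<le> K"
  shows "\<exists>C::real. \<forall>n::nat. \<forall>s t k. 0 \<le> s \<and> s \<le> t \<and> 1 \<le> k \<and> k \<le> (6::nat) \<longrightarrow>
           (\<Sum>\<^sub>\<infinity>m::int. \<integral>\<^sup>+\<omega>. ennreal (\<bar>Gm M (eta n m) (X n m) n ybar (\<Sum>\<^sub>\<infinity>x. real_of_int x * p x) s t \<omega>\<bar> ^ k) \<partial>M)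
             \<le> ennreal (C * (sqrt (real n * (t - s)) + 1))"
proof -
  have "(\<lambda>x. real_of_int x ^ 2 * p x) summable_on UNIV"
    using assms(2,3) assms(4)[rule_format, of \<delta>] assms(4)[rule_format, of "- \<delta>"]
    by (intro square_summable_if_exponential_moments[of p \<delta>]) (auto simp: prob_kernel_def)
  with assms(2) interpret finite_variance_kernel p
    by unfold_locales
  obtain K where "\<And>n x. (\<integral>\<omega>. real (eta n x \<omega>) ^ 6 \<partial>M) \<le> K" using assms(9) by blast
  then show ?thesis
    unfolding mean_def[symmetric]
    using assms(1,5-8)
    by (intro exI[of _ "64 * ((1 + K) + (1 + K)^6) * (second_moment + 2)"] allI impI
        infsum_nn_integral_Gm_power_le) (auto simp: indep_occupations_walks_def)
qed

end
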